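(* Let $G$ be a finite group acting on a finite set $\mathsf X$, and let $L:G\times G\times\mathsf X\to\mathbb{C}^\times$, $(g,h,x)\mapsto L^x_{g,h}$, and $\omega:G^3\to\mathbb{C}^\times$ satisfy $$L^x_{g,hk}\,L^x_{h,k}=\omega(g,h,k)\,L^{kx}_{g,h}\,L^x_{gh,k}\qquad\text{for all }g,h,k\in G,\ x\in\mathsf X.$$ Then the following are equivalent: (1) there is a gauge transformation $(\beta,\gamma)$ such that the transformed symbols satisfy $L'^x_{g,h}=1$ for all $g,h,x$; (2) there is a gauge transformation such that $L'^x_{a,b}=L'^y_{a,b}$ for all $a,b\in G$, $x,y\in\mathsf X$; (3) there is a gauge transformation such that $\ell'^x_{a,b;g}=1$ for all $a,b,g\in G$, $x\in\mathsf X$; (4) $L$ is block independent, i.e. there is a gauge transformation such that $\ell'^x_{a,b;g}=\ell'^y_{a,b;g}$ for all $a,b,g\in G$, $x,y\in\mathsf X$.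
   Context: A gauge transformation is a pair of functions $\beta:G\times G\to\mathbb{C}^\times$, $\gamma:G\times\mathsf X\to\mathbb{C}^\times$ ($(g,x)\mapsto\gamma^x_g$); it maps $L$ to $L'^x_{g,h}=\dfrac{\beta_{g,h}\,\gamma^x_{gh}}{\gamma^{hx}_{g}\,\gamma^x_h}L^x_{g,h}$. For any such family $L$ define $\ell^x_{a,b;g}=\dfrac{L^x_{ag,\,g^{-1}b}}{L^x_{a,b}}$, and $\ell'$ the same expression built from $L'$. Here $gx$ denotes the action of $g\in G$ on $x\in\mathsf X$. *)

theory Defs
  imports Complex_Main "HOL-Algebra.Group_Action"
begin

definition is_gauge :: "('g, 'b) monoid_scheme \<Rightarrow> 'x set \<Rightarrow> ('g \<Rightarrow> 'g \<Rightarrow> complex)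
    \<Rightarrow> ('g \<Rightarrow> 'x \<Rightarrow> complex) \<Rightarrow> bool" where
  "is_gauge G X \<beta> \<gamma> \<longleftrightarrow>
     (\<forall>g\<in>carrier G. \<forall>h\<in>carrier G. \<beta> g h \<noteq> 0) \<and>
     (\<forall>g\<in>carrier G. \<forall>x\<in>X. \<gamma> g x \<noteq> 0)"

definition gauge_transform :: "('g, 'b) monoid_scheme \<Rightarrow> ('g \<Rightarrow> 'x \<Rightarrow> 'x)
    \<Rightarrow> ('g \<Rightarrow> 'g \<Rightarrow> complex) \<Rightarrow> ('g \<Rightarrow> 'x \<Rightarrow> complex)
    \<Rightarrow> ('g \<Rightarrow> 'g \<Rightarrow> 'x \<Rightarrow> complex) \<Rightarrow> ('g \<Rightarrow> 'g \<Rightarrow> 'x \<Rightarrow> complex)" where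
  "gauge_transform G act \<beta> \<gamma> L =
     (\<lambda>g h x. \<beta> g h * \<gamma> (g \<otimes>\<^bsub>G\<^esub> h) x / (\<gamma> g (act h x) * \<gamma> h x) * L g h x)"

definition ell :: "('g, 'b) monoid_scheme \<Rightarrow> ('g \<Rightarrow> 'g \<Rightarrow> 'x \<Rightarrow> complex)
    \<Rightarrow> 'g \<Rightarrow> 'g \<Rightarrow> 'g \<Rightarrow> 'x \<Rightarrow> complex" where
  "ell G L a b g x = L (a \<otimes>\<^bsub>G\<^esub> g) (inv\<^bsub>G\<^esub> g \<otimes>\<^bsub>G\<^esub> b) x / L a b x"

end

theory Submission
  imports Defs
begin

text \<open>
  A gauge transformation of symbols satisfying the twisted cocycle equation again satisfies
  it, with \<open>\<omega>\<close> changed by the coboundary of \<open>\<beta>\<close>; so it suffices to treat symbols \<open>L\<close>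
  whose \<open>\<ell>\<close> does not depend on the site.  Putting \<open>\<psi>(x) = L\<^sup>x\<^sub>1\<^sub>,\<^sub>1\<close>, the cocycle equation
  at identities gives \<open>L\<^sup>x\<^sub>1\<^sub>,\<^sub>m = \<omega>(1,1,m) \<psi>(mx)\<close> and \<open>\<psi>(x) = \<omega>(g,1,1) L\<^sup>x\<^sub>g\<^sub>,\<^sub>1\<close>, while
  \<open>\<ell>\<^sup>x\<^sub>1\<^sub>,\<^sub>c\<^sub>d\<^sub>;\<^sub>c = L\<^sup>x\<^sub>c\<^sub>,\<^sub>d / L\<^sup>x\<^sub>1\<^sub>,\<^sub>c\<^sub>d\<close>.  Hence \<open>L\<^sup>x\<^sub>a\<^sub>,\<^sub>b\<close> is a site-independent multiple of
  \<open>\<psi>(abx)\<close>, and \<open>\<psi>(x)/\<psi>(ax)\<close> is independent of \<open>x\<close>; together, \<open>L\<^sup>x\<^sub>a\<^sub>,\<^sub>b / \<psi>(bx)\<close> is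
  independent of \<open>x\<close>, which is the effect of the gauge \<open>\<gamma>\<^sup>x\<^sub>g = \<psi>(x)\<close>.  Site-independent
  symbols are then trivialised by the gauge \<open>\<beta> = 1/L\<^sup>x\<^sup>0\<close>.
\<close>

definition site_independent ::
    "('g, 'b) monoid_scheme \<Rightarrow> 'x set \<Rightarrow> ('g \<Rightarrow> 'g \<Rightarrow> 'x \<Rightarrow> complex) \<Rightarrow> bool" where
  "site_independent G X L \<longleftrightarrow>
     (\<forall>a\<in>carrier G. \<forall>b\<in>carrier G. \<forall>x\<in>X. \<forall>y\<in>X. L a b x = L a b y)"

definition block_independent ::
    "('g, 'b) monoid_scheme \<Rightarrow> 'x set \<Rightarrow> ('g \<Rightarrow> 'g \<Rightarrow> 'x \<Rightarrow> complex) \<Rightarrow> bool" where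
  "block_independent G X L \<longleftrightarrow>
     (\<forall>a\<in>carrier G. \<forall>b\<in>carrier G. \<forall>g\<in>carrier G. \<forall>x\<in>X. \<forall>y\<in>X.
        ell G L a b g x = ell G L a b g y)"

lemma gauge_transform_gauge_transform:
  "gauge_transform G act \<beta>' \<gamma>' (gauge_transform G act \<beta> \<gamma> L)
     = gauge_transform G act (\<lambda>g h. \<beta> g h * \<beta>' g h) (\<lambda>g x. \<gamma> g x * \<gamma>' g x) L"
  by (simp add: gauge_transform_def fun_eq_iff divide_inverse mult_ac)

lemma is_gauge_mult:
  "is_gauge G X \<beta> \<gamma> \<Longrightarrow> is_gauge G X \<beta>' \<gamma>'
     \<Longrightarrow> is_gauge G X (\<lambda>g h. \<beta> g h * \<beta>' g h) (\<lambda>g x. \<gamma> g x * \<gamma>' g x)"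
  by (simp add: is_gauge_def)

lemma ex_gauge_of_gauge_transform:
  assumes "is_gauge G X \<beta> \<gamma>" "is_gauge G X \<beta>' \<gamma>'"
    and "P (gauge_transform G act \<beta>' \<gamma>' (gauge_transform G act \<beta> \<gamma> L))"
  shows "\<exists>\<beta>'' \<gamma>''. is_gauge G X \<beta>'' \<gamma>'' \<and> P (gauge_transform G act \<beta>'' \<gamma>'' L)"
  using is_gauge_mult[OF assms(1,2)] assms(3) unfolding gauge_transform_gauge_transform by blast

lemma gauge_transform_edge:
  "gauge_transform G act \<beta> (\<lambda>_ _. 1) L g h x = \<beta> g h * L g h x"
  by (simp add: gauge_transform_def)

lemma gauge_transform_vertex:
  "\<psi> x \<noteq> 0 \<Longrightarrow> gauge_transform G act (\<lambda>_ _. 1) (\<lambda>_. \<psi>) L g h x = L g h x / \<psi> (act h x)"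
  by (simp add: gauge_transform_def)

lemma (in group_action) act_closed: "g \<in> carrier G \<Longrightarrow> x \<in> E \<Longrightarrow> \<phi> g x \<in> E"
  using element_image by blast

lemma (in group_action) act_one: "x \<in> E \<Longrightarrow> \<phi> \<one> x = x"
  using fun_cong[OF id_eq_one, of x] by simp

locale twisted_cocycle = group G + group_action G X act
  for G :: "('g, 'b) monoid_scheme" (structure) and X :: "'x set" and act :: "'g \<Rightarrow> 'x \<Rightarrow> 'x" +
  fixes L :: "'g \<Rightarrow> 'g \<Rightarrow> 'x \<Rightarrow> complex" and \<omega> :: "'g \<Rightarrow> 'g \<Rightarrow> 'g \<Rightarrow> complex"
  assumes nonzero: "\<lbrakk>g \<in> carrier G; h \<in> carrier G; x \<in> X\<rbrakk> \<Longrightarrow> L g h x \<noteq> 0"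
    and cocycle: "\<lbrakk>g \<in> carrier G; h \<in> carrier G; k \<in> carrier G; x \<in> X\<rbrakk> \<Longrightarrow>
        L g (h \<otimes> k) x * L h k x = \<omega> g h k * L g h (act k x) * L (g \<otimes> h) k x"
begin

lemma L_one_left:
  assumes "m \<in> carrier G" "x \<in> X"
  shows "L \<one> m x = \<omega> \<one> \<one> m * L \<one> \<one> (act m x)"
proof -
  have "L \<one> m x * L \<one> m x = (\<omega> \<one> \<one> m * L \<one> \<one> (act m x)) * L \<one> m x"
    using cocycle[of \<one> \<one> m x] assms by simp
  then show ?thesis
    using nonzero[of \<one> m x] assms by simp
qed

lemma L_one_right:
  assumes "g \<in> carrier G" "x \<in> X"
  shows "L \<one> \<one> x = \<omega> g \<one> \<one> * L g \<one> x"
proof -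
  have "L \<one> \<one> x * L g \<one> x = (\<omega> g \<one> \<one> * L g \<one> x) * L g \<one> x"
    using cocycle[of g \<one> \<one> x] assms by (simp add: act_one mult.commute)
  then show ?thesis
    using nonzero[of g \<one> x] assms by simp
qed

lemma gauge_transform_nonzero:
  "\<lbrakk>is_gauge G X \<beta> \<gamma>; g \<in> carrier G; h \<in> carrier G; x \<in> X\<rbrakk>
     \<Longrightarrow> gauge_transform G act \<beta> \<gamma> L g h x \<noteq> 0"
  using nonzero act_closed by (simp add: is_gauge_def gauge_transform_def)

lemma gauge_transform_twisted_cocycle:
  assumes "is_gauge G X \<beta> \<gamma>"
  shows "twisted_cocycle G X act (gauge_transform G act \<beta> \<gamma> L)
           (\<lambda>g h k. \<omega> g h k * \<beta> g (h \<otimes> k) * \<beta> h k / (\<beta> g h * \<beta> (g \<otimes> h) k))"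
proof unfold_locales
  fix g h x assume "g \<in> carrier G" "h \<in> carrier G" "x \<in> X"
  then show "gauge_transform G act \<beta> \<gamma> L g h x \<noteq> 0"
    by (rule gauge_transform_nonzero[OF assms])
next
  fix g h k x assume g: "g \<in> carrier G" and h: "h \<in> carrier G" and k: "k \<in> carrier G" and x: "x \<in> X"
  have "L g (h \<otimes> k) x * L h k x = \<omega> g h k * L g h (act k x) * L (g \<otimes> h) k x"
    using cocycle g h k x .
  moreover have "act h (act k x) = act (h \<otimes> k) x" "g \<otimes> h \<otimes> k = g \<otimes> (h \<otimes> k)"
    using composition_rule g h k x by (simp_all add: m_assoc)
  moreover have "\<beta> g h \<noteq> 0" "\<beta> (g \<otimes> h) k \<noteq> 0"
    "\<gamma> g (act (h \<otimes> k) x) \<noteq> 0" "\<gamma> (h \<otimes> k) x \<noteq> 0" "\<gamma> h (act k x) \<noteq> 0" "\<gamma> k x \<noteq> 0"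
    "\<gamma> (g \<otimes> h) (act k x) \<noteq> 0"
    using assms g h k x act_closed by (simp_all add: is_gauge_def)
  ultimately show "gauge_transform G act \<beta> \<gamma> L g (h \<otimes> k) x * gauge_transform G act \<beta> \<gamma> L h k x
      = \<omega> g h k * \<beta> g (h \<otimes> k) * \<beta> h k / (\<beta> g h * \<beta> (g \<otimes> h) k)
        * gauge_transform G act \<beta> \<gamma> L g h (act k x) * gauge_transform G act \<beta> \<gamma> L (g \<otimes> h) k x"
    by (simp add: gauge_transform_def field_simps)
qed

lemma block_independent_cross_ratio:
  assumes "block_independent G X L" "c \<in> carrier G" "d \<in> carrier G" "z \<in> X" "w \<in> X"
  shows "L c d z * L \<one> (c \<otimes> d) w = L c d w * L \<one> (c \<otimes> d) z"
proof -
  \<comment> \<open>the instance \<open>\<ell>\<^sup>z\<^sub>1\<^sub>,\<^sub>c\<^sub>d\<^sub>;\<^sub>c = L\<^sup>z\<^sub>c\<^sub>,\<^sub>d / L\<^sup>z\<^sub>1\<^sub>,\<^sub>c\<^sub>d\<close> of block independence\<close>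
  have "inv c \<otimes> (c \<otimes> d) = d"
    using assms(2,3) by (simp add: m_assoc[symmetric])
  then have "L c d z / L \<one> (c \<otimes> d) z = L c d w / L \<one> (c \<otimes> d) w"
    using assms unfolding block_independent_def ell_def
    by (metis l_one m_closed one_closed)
  then show ?thesis
    using nonzero assms(2-5) by (simp add: divide_simps)
qed

lemma block_independent_L_one_one_act_ratio:
  assumes "block_independent G X L" "a \<in> carrier G" "z \<in> X" "w \<in> X"
  shows "L \<one> \<one> w * L \<one> \<one> (act a z) = L \<one> \<one> z * L \<one> \<one> (act a w)"
proof -
  have "\<omega> \<one> \<one> a \<noteq> 0"
    using L_one_left[of a z] nonzero[of \<one> a z] assms by auto
  moreover have "\<omega> \<one> \<one> a * (L \<one> \<one> w * L \<one> \<one> (act a z)) = \<omega> \<one> \<one> a * (L \<one> \<one> z * L \<one> \<one> (act a w))"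
  proof -
    have "\<omega> \<one> \<one> a * (L \<one> \<one> w * L \<one> \<one> (act a z)) = \<omega> a \<one> \<one> * (L a \<one> w * L \<one> a z)"
      using L_one_right[of a w] L_one_left[of a z] assms by (simp add: mult_ac)
    also have "\<dots> = \<omega> a \<one> \<one> * (L a \<one> z * L \<one> a w)"
      using block_independent_cross_ratio[of a \<one> z w] assms by (simp add: mult.commute)
    also have "\<dots> = \<omega> \<one> \<one> a * (L \<one> \<one> z * L \<one> \<one> (act a w))"
      using L_one_right[of a z] L_one_left[of a w] assms by (simp add: mult_ac)
    finally show ?thesis .
  qed
  ultimately show ?thesis by simp
qed

lemma block_independent_normalized_site_independent:
  assumes "block_independent G X L"
  shows "site_independent G X (\<lambda>a b x. L a b x / L \<one> \<one> (act b x))"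
  unfolding site_independent_def
proof (intro ballI)
  fix a b x y assume a: "a \<in> carrier G" and b: "b \<in> carrier G" and x: "x \<in> X" and y: "y \<in> X"
  have bx_in: "act b x \<in> X" and by_in: "act b y \<in> X"
    using act_closed a b x y by auto
  let ?p = "L \<one> \<one> (act a (act b x))" and ?q = "L \<one> \<one> (act a (act b y))"
  have "\<omega> \<one> \<one> (a \<otimes> b) * (L a b x * ?q) = \<omega> \<one> \<one> (a \<otimes> b) * (L a b y * ?p)"
    using block_independent_cross_ratio[OF assms a b x y] L_one_left[of "a \<otimes> b" x] L_one_left[of "a \<otimes> b" y]
      composition_rule a b x y by (simp add: mult_ac)
  moreover have "\<omega> \<one> \<one> (a \<otimes> b) \<noteq> 0"
    using L_one_left[of "a \<otimes> b" x] nonzero[of \<one> "a \<otimes> b" x] a b x by auto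
  ultimately have Lpq: "L a b x * ?q = L a b y * ?p"
    by simp
  have pq: "L \<one> \<one> (act b y) * ?p = L \<one> \<one> (act b x) * ?q"
    using block_independent_L_one_one_act_ratio[OF assms a bx_in by_in] .
  have "?p * (L a b x * L \<one> \<one> (act b y)) = ?p * (L a b y * L \<one> \<one> (act b x))"
    using Lpq pq by (metis mult.assoc mult.commute)
  moreover have "?p \<noteq> 0" "L \<one> \<one> (act b x) \<noteq> 0" "L \<one> \<one> (act b y) \<noteq> 0"
    using nonzero act_closed a bx_in by_in by auto
  ultimately show "L a b x / L \<one> \<one> (act b x) = L a b y / L \<one> \<one> (act b y)"
    by (simp add: divide_simps)
qed

lemma gauge_site_independent_if_block_independent:
  assumes "is_gauge G X \<beta> \<gamma>" "block_independent G X (gauge_transform G act \<beta> \<gamma> L)"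
  shows "\<exists>\<beta>' \<gamma>'. is_gauge G X \<beta>' \<gamma>' \<and> site_independent G X (gauge_transform G act \<beta>' \<gamma>' L)"
proof -
  let ?M = "gauge_transform G act \<beta> \<gamma> L"
  interpret M: twisted_cocycle G X act ?M
    "\<lambda>g h k. \<omega> g h k * \<beta> g (h \<otimes> k) * \<beta> h k / (\<beta> g h * \<beta> (g \<otimes> h) k)"
    using gauge_transform_twisted_cocycle[OF assms(1)] .
  have vertex_gauge: "is_gauge G X (\<lambda>_ _. 1) (\<lambda>_. ?M \<one> \<one>)"
    using M.nonzero by (simp add: is_gauge_def)
  have vertex: "gauge_transform G act (\<lambda>_ _. 1) (\<lambda>_. ?M \<one> \<one>) ?M a b x = ?M a b x / ?M \<one> \<one> (act b x)"
    if "x \<in> X" for a b x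
    using M.nonzero[OF one_closed one_closed that] by (rule gauge_transform_vertex)
  have "site_independent G X (gauge_transform G act (\<lambda>_ _. 1) (\<lambda>_. ?M \<one> \<one>) ?M)"
    using M.block_independent_normalized_site_independent[OF assms(2)]
    unfolding site_independent_def by (metis vertex)
  then show ?thesis
    by (rule ex_gauge_of_gauge_transform[OF assms(1) vertex_gauge])
qed

lemma gauge_trivial_if_site_independent:
  assumes gauge: "is_gauge G X \<beta> \<gamma>" and site: "site_independent G X (gauge_transform G act \<beta> \<gamma> L)"
  shows "\<exists>\<beta>' \<gamma>'. is_gauge G X \<beta>' \<gamma>' \<and>
           (\<forall>g\<in>carrier G. \<forall>h\<in>carrier G. \<forall>x\<in>X. gauge_transform G act \<beta>' \<gamma>' L g h x = 1)"
proof (cases "X = {}")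
  case True
  then show ?thesis
    using gauge by blast
next
  case False
  then obtain x\<^sub>0 where x\<^sub>0: "x\<^sub>0 \<in> X" by blast
  let ?M = "gauge_transform G act \<beta> \<gamma> L"
  have "is_gauge G X (\<lambda>g h. 1 / ?M g h x\<^sub>0) (\<lambda>_ _. 1)"
    using gauge_transform_nonzero[OF gauge _ _ x\<^sub>0] by (simp add: is_gauge_def)
  moreover have "\<forall>g\<in>carrier G. \<forall>h\<in>carrier G. \<forall>x\<in>X.
      gauge_transform G act (\<lambda>g h. 1 / ?M g h x\<^sub>0) (\<lambda>_ _. 1) ?M g h x = 1"
  proof (intro ballI)
    fix g h x assume "g \<in> carrier G" "h \<in> carrier G" "x \<in> X"
    then have "?M g h x = ?M g h x\<^sub>0" "?M g h x\<^sub>0 \<noteq> 0"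
      using site gauge_transform_nonzero[OF gauge] x\<^sub>0 unfolding site_independent_def by blast+
    then show "gauge_transform G act (\<lambda>g h. 1 / ?M g h x\<^sub>0) (\<lambda>_ _. 1) ?M g h x = 1"
      unfolding gauge_transform_edge by simp
  qed
  ultimately show ?thesis
    by (rule ex_gauge_of_gauge_transform[OF gauge])
qed

end

theorem mainTheorem7:
  fixes G :: "('g, 'b) monoid_scheme" and X :: "'x set" and act :: "'g \<Rightarrow> 'x \<Rightarrow> 'x"
    and L :: "'g \<Rightarrow> 'g \<Rightarrow> 'x \<Rightarrow> complex" and \<omega> :: "'g \<Rightarrow> 'g \<Rightarrow> 'g \<Rightarrow> complex"
  assumes "group G" and "finite (carrier G)" and "finite X"
    and "group_action G X act"
    and L_nz: "\<forall>g\<in>carrier G. \<forall>h\<in>carrier G. \<forall>x\<in>X. L g h x \<noteq> 0"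
    and \<omega>_nz: "\<forall>g\<in>carrier G. \<forall>h\<in>carrier G. \<forall>k\<in>carrier G. \<omega> g h k \<noteq> 0"
    and cocycle: "\<forall>g\<in>carrier G. \<forall>h\<in>carrier G. \<forall>k\<in>carrier G. \<forall>x\<in>X.
        L g (h \<otimes>\<^bsub>G\<^esub> k) x * L h k x = \<omega> g h k * L g h (act k x) * L (g \<otimes>\<^bsub>G\<^esub> h) k x"
  defines "P1 \<equiv> \<exists>\<beta> \<gamma>. is_gauge G X \<beta> \<gamma> \<and>
        (\<forall>g\<in>carrier G. \<forall>h\<in>carrier G. \<forall>x\<in>X. gauge_transform G act \<beta> \<gamma> L g h x = 1)"
    and "P2 \<equiv> \<exists>\<beta> \<gamma>. is_gauge G X \<beta> \<gamma> \<and>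
        (\<forall>a\<in>carrier G. \<forall>b\<in>carrier G. \<forall>x\<in>X. \<forall>y\<in>X.
           gauge_transform G act \<beta> \<gamma> L a b x = gauge_transform G act \<beta> \<gamma> L a b y)"
    and "P3 \<equiv> \<exists>\<beta> \<gamma>. is_gauge G X \<beta> \<gamma> \<and>
        (\<forall>a\<in>carrier G. \<forall>b\<in>carrier G. \<forall>g\<in>carrier G. \<forall>x\<in>X.
           ell G (gauge_transform G act \<beta> \<gamma> L) a b g x = 1)"
    and "P4 \<equiv> \<exists>\<beta> \<gamma>. is_gauge G X \<beta> \<gamma> \<and>
        (\<forall>a\<in>carrier G. \<forall>b\<in>carrier G. \<forall>g\<in>carrier G. \<forall>x\<in>X. \<forall>y\<in>X.
           ell G (gauge_transform G act \<beta> \<gamma> L) a b g x = ell G (gauge_transform G act \<beta> \<gamma> L) a b g y)"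
  shows "(P1 \<longleftrightarrow> P2) \<and> (P2 \<longleftrightarrow> P3) \<and> (P3 \<longleftrightarrow> P4)"
proof -
  interpret twisted_cocycle G X act L \<omega>
    using L_nz cocycle
    by (intro twisted_cocycle.intro twisted_cocycle_axioms.intro assms(1,4)) auto
  have P2: "P2 \<longleftrightarrow> (\<exists>\<beta> \<gamma>. is_gauge G X \<beta> \<gamma> \<and> site_independent G X (gauge_transform G act \<beta> \<gamma> L))"
    unfolding P2_def site_independent_def ..
  have P4: "P4 \<longleftrightarrow> (\<exists>\<beta> \<gamma>. is_gauge G X \<beta> \<gamma> \<and> block_independent G X (gauge_transform G act \<beta> \<gamma> L))"
    unfolding P4_def block_independent_def ..
  have "P1 \<Longrightarrow> P3"
    unfolding P1_def P3_def ell_def by (elim exE conjE, intro exI conjI) auto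
  moreover have "P3 \<Longrightarrow> P4"
    unfolding P3_def P4_def by (elim exE conjE, intro exI conjI) auto
  moreover have "P4 \<Longrightarrow> P2"
    unfolding P2 P4 using gauge_site_independent_if_block_independent by blast
  moreover have "P2 \<Longrightarrow> P1"
    unfolding P1_def P2 using gauge_trivial_if_site_independent by blast
  ultimately show ?thesis by blast
qed

end
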